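(* Let $1\le k<n$ and let $P\in\mathbb{H}_n$ be a rank-$k$ orthogonal projection. Then $S^{\mathbb{H}}(P)$ is a convex cone with real affine dimension $k^2+(n-k)^2$. Moreover, with respect to the decomposition $\mathbb{C}^n=\operatorname{Ran}P\oplus\operatorname{Ker}P$, $$S^{\mathbb{H}}(P)=\left\{\begin{pmatrix}B_{11}&0\\0&B_{22}\end{pmatrix}: B_{11}\in\mathbb{H}_k,\ B_{22}\in\mathbb{H}_{n-k},\ \operatorname{tr}B_{11}=w_k(B)\right\},$$ and $\operatorname{span}_{\mathbb{R}}S^{\mathbb{H}}(P)=\mathbb{H}_k\oplus\mathbb{H}_{n-k}$.
   Context: $\mathbb{H}_n$ is the real space of $n\times n$ Hermitian matrices. $w_k(A)=\max\{|\operatorname{tr}(AP)|: P=P^*=P^2,\operatorname{tr}P=k\}$. For a rank-$k$ orthogonal projection $P$, $S^{\mathbb{H}}(P)=\{B\in\mathbb{H}_n:\operatorname{tr}(BP)=w_k(B)\}$. A convex cone is closed under nonnegative real linear combinations; its real affine dimension is the real dimension of its real span. *)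

theory Defs
  imports "HOL-Analysis.Analysis"
begin

text \<open>n x n complex matrices, n = CARD('n); viewed as a real vector space via scaleR.\<close>

definition cadj :: "complex^'n^'n \<Rightarrow> complex^'n^'n" where
  "cadj A = (\<chi> i j. cnj (A $ j $ i))"

definition hermitian :: "complex^'n^'n \<Rightarrow> bool" where
  "hermitian A \<longleftrightarrow> cadj A = A"

definition Herm :: "(complex^'n^'n) set" where
  "Herm = {A. hermitian A}"

definition orth_proj :: "complex^'n^'n \<Rightarrow> bool" where
  "orth_proj P \<longleftrightarrow> cadj P = P \<and> P ** P = P"

definition wk :: "nat \<Rightarrow> complex^'n^'n \<Rightarrow> real" where
  "wk k A = Sup {cmod (trace (A ** Q)) | Q. orth_proj Q \<and> trace Q = of_nat k}"

definition SH :: "nat \<Rightarrow> complex^'n^'n \<Rightarrow> (complex^'n^'n) set" where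
  "SH k P = {B \<in> Herm. trace (B ** P) = complex_of_real (wk k B)}"

end

theory Submission
  imports Defs
begin

text \<open>A Hermitian B lies in S(P) exactly when tr(BP) is real and dominates |tr(BQ)| for every
  rank-k projection Q. If the off-diagonal block P B (I - P) were nonzero, tilting a unit vector of
  Ran P slightly towards Ker P would produce such a Q with Re tr(BQ) > tr(BP); hence every element of
  S(P) commutes with P, i.e. is block diagonal for Ran P + Ker P. Conversely, P + x x^* for x in Ran P
  and |x|^2 P - x x^* for x in Ker P belong to S(P). So the span of S(P) contains x x^* for every x
  in one of the two blocks and, by polarization, the standard real basis of H_k + H_(n-k), which
  has k^2 + (n - k)^2 elements.\<close>

subsection \<open>Matrix algebra\<close>

lemma matrix_add_rdistrib: "(A + B) ** C = A ** C + B ** C"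
  by (simp add: matrix_matrix_mult_def vec_eq_iff distrib_right sum.distrib)

lemma matrix_diff_ldistrib: "(C::'a::ring_1^'n^'m) ** (A - B) = C ** A - C ** B"
  by (simp add: matrix_matrix_mult_def vec_eq_iff right_diff_distrib sum_subtractf)

lemma matrix_diff_rdistrib: "((A::'a::ring_1^'n^'m) - B) ** C = A ** C - B ** C"
  by (simp add: matrix_matrix_mult_def vec_eq_iff left_diff_distrib sum_subtractf)

lemma trace_sum: "trace (sum f S) = (\<Sum>i\<in>S. trace (f i :: complex^'n^'n))"
  by (induct S rule: infinite_finite_induct) (simp_all add: trace_add trace_def[of 0])

lemma matrix_sum_ldistrib: "(A::complex^'n^'n) ** sum f S = (\<Sum>i\<in>S. A ** f i)"
  by (induct S rule: infinite_finite_induct) (auto simp: matrix_add_ldistrib)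

lemma trace_scaleR: "trace (r *\<^sub>R A) = complex_of_real r * trace (A::complex^'n^'n)"
  by (simp add: trace_def sum_distrib_left scaleR_conv_of_real[where 'a=complex])

lemma sum_matrix_vector_mult: "sum f S *v x = (\<Sum>i\<in>S. f i *v x)"
  by (induct S rule: infinite_finite_induct) (auto simp: matrix_vector_mult_add_rdistrib)

lemma matrix_vector_mult_scaleR_complex: "A *v (r *\<^sub>R x) = r *\<^sub>R (A *v (x::complex^'n))"
  by (simp add: matrix_vector_mult_def vec_eq_iff scaleR_sum_right)

lemma matrix_vector_mult_axis: "(A *v axis j 1) $ i = (A$i$j :: complex)"
proof -
  have "(A *v axis j 1) $ i = (\<Sum>l\<in>UNIV. if l = j then A$i$j else 0)"
    unfolding matrix_vector_mult_def vec_lambda_beta by (rule sum.cong) (auto simp: axis_def)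
  then show ?thesis by simp
qed

lemma mem_Herm_iff: "A \<in> Herm \<longleftrightarrow> cadj A = A"
  by (simp add: Herm_def hermitian_def)

lemma cadj_mult: "cadj (A ** B) = cadj B ** cadj A"
  by (simp add: cadj_def vec_eq_iff matrix_matrix_mult_def mult.commute)

lemma cadj_add: "cadj (A + B) = cadj A + cadj B"
  by (simp add: cadj_def vec_eq_iff)

lemma cadj_diff: "cadj (A - B) = cadj A - cadj B"
  by (simp add: cadj_def vec_eq_iff)

lemma cadj_scaleR: "cadj (r *\<^sub>R A) = r *\<^sub>R cadj A"
  by (simp add: cadj_def vec_eq_iff)

lemma cadj_sum: "cadj (sum f S) = (\<Sum>i\<in>S. cadj (f i))"
  by (induct S rule: infinite_finite_induct) (auto simp: cadj_add cadj_def vec_eq_iff)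

lemma cadj_zero [simp]: "cadj 0 = 0"
  by (simp add: cadj_def vec_eq_iff)

lemma cadj_mat_1 [simp]: "cadj (mat 1) = mat 1"
  by (simp add: cadj_def vec_eq_iff mat_def)

subsection \<open>The Hermitian product and rank-one matrices\<close>

definition cinner :: "complex^'n \<Rightarrow> complex^'n \<Rightarrow> complex" where
  "cinner x y = (\<Sum>i\<in>UNIV. cnj (x$i) * y$i)"

definition outer :: "complex^'n \<Rightarrow> complex^'n \<Rightarrow> complex^'n^'n" where
  "outer x y = (\<chi> i j. x$i * cnj (y$j))"

lemma cadj_outer: "cadj (outer x y) = outer y x"
  by (simp add: cadj_def outer_def vec_eq_iff)

lemma cinner_adj: "cinner (A *v x) y = cinner x (cadj A *v y)"
proof -
  have "cinner (A *v x) y = (\<Sum>i\<in>UNIV. \<Sum>j\<in>UNIV. cnj (A$i$j) * cnj (x$j) * y$i)"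
    by (simp add: cinner_def matrix_vector_mult_def sum_distrib_right)
  also have "\<dots> = (\<Sum>j\<in>UNIV. \<Sum>i\<in>UNIV. cnj (A$i$j) * cnj (x$j) * y$i)"
    by (rule sum.swap)
  also have "\<dots> = cinner x (cadj A *v y)"
    by (simp add: cinner_def cadj_def matrix_vector_mult_def sum_distrib_left mult_ac)
  finally show ?thesis .
qed

lemma cinner_hermitian: "cadj A = A \<Longrightarrow> cinner (A *v x) y = cinner x (A *v y)"
  by (simp add: cinner_adj)

lemma cinner_commute: "cinner y x = cnj (cinner x y)"
  by (simp add: cinner_def mult.commute)

lemma cinner_add_left: "cinner (x + y) z = cinner x z + cinner y z"
  and cinner_add_right: "cinner x (y + z) = cinner x y + cinner x z"
  and cinner_smult_left: "cinner (c *s x) y = cnj c * cinner x y"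
  and cinner_smult_right: "cinner x (c *s y) = c * cinner x y"
  by (simp_all add: cinner_def algebra_simps sum.distrib sum_distrib_left)

lemma cinner_zero_left [simp]: "cinner 0 x = 0"
  and cinner_zero_right [simp]: "cinner x 0 = 0"
  by (simp_all add: cinner_def)

lemma cinner_axis: "cinner (axis i 1) y = y$i"
proof -
  have "cinner (axis i 1) y = (\<Sum>j\<in>UNIV. if j = i then y$i else 0)"
    unfolding cinner_def by (rule sum.cong) (auto simp: axis_def)
  then show ?thesis by simp
qed

lemma Re_cinner: "Re (cinner x y) = inner x y"
  by (simp add: cinner_def inner_vec_def inner_complex_def Re_sum)

lemma cinner_self: "cinner x x = complex_of_real ((norm x)\<^sup>2)"
proof -
  have "Im (cinner x x) = 0"
    by (simp add: cinner_def Im_sum)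
  then show ?thesis
    by (simp add: complex_eq_iff Re_cinner power2_norm_eq_inner)
qed

lemma norm_axis_one: "norm (axis i (1::complex)) = 1"
  by (simp add: inner_axis' norm_eq_1)

lemma cinner_scaleR_left: "cinner (r *\<^sub>R x) y = complex_of_real r * cinner x y"
  and cinner_scaleR_right: "cinner x (r *\<^sub>R y) = complex_of_real r * cinner x y"
  by (simp_all add: cinner_def sum_distrib_left scaleR_conv_of_real[where 'a=complex] mult_ac)

lemma matrix_vector_mult_sgn_eq: "P *v x = x \<Longrightarrow> P *v sgn x = sgn (x::complex^'n)"
  by (simp add: sgn_div_norm matrix_vector_mult_scaleR_complex)

lemma matrix_eq_0_if_cinner: "(\<And>x y. cinner x (A *v y) = 0) \<Longrightarrow> A = 0"
  by (simp add: vec_eq_iff) (metis cinner_axis matrix_vector_mult_axis)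

lemma trace_eq_sum_cinner: "trace A = (\<Sum>j\<in>UNIV. cinner (axis j 1) (A *v axis j 1))"
  by (simp add: trace_def cinner_axis matrix_vector_mult_axis)

lemma outer_apply: "outer x y *v z = cinner y z *s x"
  by (simp add: outer_def cinner_def matrix_vector_mult_def vec_eq_iff sum_distrib_left mult_ac)

lemma mult_outer_left: "A ** outer x y = outer (A *v x) y"
  by (simp add: outer_def matrix_matrix_mult_def matrix_vector_mult_def vec_eq_iff
      sum_distrib_left sum_distrib_right mult_ac)

lemma mult_outer_right: "outer x y ** A = outer x (cadj A *v y)"
  by (simp add: outer_def cadj_def matrix_matrix_mult_def matrix_vector_mult_def vec_eq_iff
      sum_distrib_left mult_ac)

lemma outer_mult_outer: "outer x y ** outer z w = outer (cinner y z *s x) w"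
  by (simp add: mult_outer_left outer_apply)

lemma trace_mult_outer: "trace (A ** outer x y) = cinner y (A *v x)"
  by (simp add: trace_def outer_def cinner_def matrix_matrix_mult_def matrix_vector_mult_def
      sum_distrib_left mult_ac)

lemma trace_outer: "trace (outer x y) = cinner y x"
  using trace_mult_outer[of "mat 1" x y] by simp

lemma outer_zero_left [simp]: "outer 0 y = 0"
  by (simp add: outer_def vec_eq_iff)

lemma outer_zero_right [simp]: "outer x 0 = 0"
  by (simp add: outer_def vec_eq_iff)

lemma outer_unit_idem: "norm u = 1 \<Longrightarrow> outer u u ** outer u u = outer u u"
  by (simp add: outer_mult_outer cinner_self)

subsection \<open>Orthogonal projections\<close>

lemma orth_proj_hermitian: "orth_proj P \<Longrightarrow> cadj P = P"
  and orth_proj_idem: "orth_proj P \<Longrightarrow> P ** P = P"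
  by (simp_all add: orth_proj_def)

lemma orth_proj_apply_idem: "orth_proj P \<Longrightarrow> P *v (P *v x) = P *v x"
  by (simp add: orth_proj_def matrix_vector_mul_assoc)

lemma orth_proj_compl: "orth_proj P \<Longrightarrow> orth_proj (mat 1 - P)"
  by (simp add: orth_proj_def cadj_diff matrix_diff_ldistrib matrix_diff_rdistrib)

lemma cinner_orth_proj_self:
  assumes "orth_proj P"
  shows "cinner x (P *v x) = complex_of_real ((norm (P *v x))\<^sup>2)"
proof -
  have "cinner x (P *v x) = cinner x (P *v (P *v x))"
    by (simp add: orth_proj_apply_idem[OF assms])
  also have "\<dots> = cinner (P *v x) (P *v x)"
    by (simp add: cinner_hermitian orth_proj_hermitian[OF assms])
  finally show ?thesis by (simp add: cinner_self)
qed

lemma norm_orth_proj_le: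
  assumes "orth_proj P"
  shows "norm (P *v x) \<le> norm x"
proof -
  have "(norm (P *v x))\<^sup>2 = inner x (P *v x)"
    using cinner_orth_proj_self[OF assms, of x] by (metis Re_cinner Re_complex_of_real)
  also have "\<dots> \<le> norm x * norm (P *v x)"
    by (rule norm_cauchy_schwarz)
  finally have "norm (P *v x) * norm (P *v x) \<le> norm x * norm (P *v x)"
    by (simp add: power2_eq_square)
  then show ?thesis
    by (cases "P *v x = 0") (auto simp: mult_le_cancel_right)
qed

lemma orth_proj_entry_le:
  assumes "orth_proj P"
  shows "cmod (P$i$j) \<le> 1"
  using Finite_Cartesian_Product.norm_nth_le[of "P *v axis j 1" i] norm_orth_proj_le[OF assms, of "axis j 1"]
  by (simp add: matrix_vector_mult_axis norm_axis_one)

lemma orth_proj_trace_eq_0: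
  assumes "orth_proj P" "trace P = 0"
  shows "P = 0"
proof -
  have "trace P = complex_of_real (\<Sum>j\<in>UNIV. (norm (P *v axis j 1))\<^sup>2)"
    by (simp add: trace_eq_sum_cinner cinner_orth_proj_self[OF assms(1)])
  then have "(\<Sum>j\<in>UNIV. (norm (P *v axis j 1))\<^sup>2) = 0"
    using assms(2) by (metis of_real_eq_0_iff)
  then have "\<forall>j. P *v axis j 1 = 0"
    by (simp add: sum_nonneg_eq_0_iff)
  then show "P = 0"
    by (auto simp: vec_eq_iff) (metis matrix_vector_mult_axis zero_index)
qed

lemma orth_proj_diff_outer:
  assumes P: "orth_proj P" and u: "P *v u = u" "norm u = 1"
  shows "orth_proj (P - outer u u)"
proof -
  have "P ** outer u u = outer u u" "outer u u ** P = outer u u"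
    using u(1) by (simp_all add: mult_outer_left mult_outer_right orth_proj_hermitian[OF P])
  then show ?thesis
    using P outer_unit_idem[OF u(2)]
    by (simp add: orth_proj_def cadj_diff cadj_outer matrix_diff_ldistrib matrix_diff_rdistrib)
qed

lemma orth_proj_add_outer:
  assumes R: "orth_proj R" and w: "R *v w = 0" "norm w = 1"
  shows "orth_proj (R + outer w w)"
proof -
  have "R ** outer w w = 0" "outer w w ** R = 0"
    using w(1) by (simp_all add: mult_outer_left mult_outer_right orth_proj_hermitian[OF R])
  then show ?thesis
    using R outer_unit_idem[OF w(2)]
    by (simp add: orth_proj_def cadj_add cadj_outer matrix_add_ldistrib matrix_add_rdistrib)
qed

definition orthonormal_on :: "nat set \<Rightarrow> (nat \<Rightarrow> complex^'n) \<Rightarrow> bool" where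
  "orthonormal_on S u \<longleftrightarrow> (\<forall>i\<in>S. \<forall>j\<in>S. cinner (u i) (u j) = (if i = j then 1 else 0))"

lemma orthonormal_on_norm:
  assumes "orthonormal_on S u" "i \<in> S"
  shows "norm (u i) = 1"
proof -
  have "cinner (u i) (u i) = 1"
    using assms by (simp add: orthonormal_on_def)
  then have "(norm (u i))\<^sup>2 = 1"
    by (simp only: cinner_self of_real_eq_1_iff)
  then show ?thesis
    using norm_ge_zero[of "u i"] by (simp add: power2_eq_1_iff)
qed

lemma sum_outer_apply_orthonormal:
  assumes "orthonormal_on S u" "finite S" "i \<in> S"
  shows "(\<Sum>l\<in>S. outer (u l) (u l)) *v u i = u i"
proof -
  have "(\<Sum>l\<in>S. outer (u l) (u l)) *v u i = (\<Sum>l\<in>S. if l = i then u i else 0)"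
    using assms(1,3) by (auto simp: sum_matrix_vector_mult outer_apply orthonormal_on_def
        intro!: sum.cong)
  then show ?thesis using assms(2,3) by simp
qed

lemma orth_proj_unit_vector:
  assumes "orth_proj P" "P \<noteq> 0"
  obtains y where "P *v y = y" "norm y = 1"
proof -
  obtain j where "P *v axis j 1 \<noteq> 0"
    using assms(2) by (metis matrix_vector_mult_axis vec_eq_iff zero_index)
  then show thesis
    using that[of "sgn (P *v axis j 1)"] orth_proj_apply_idem[OF assms(1)]
    by (simp add: matrix_vector_mult_sgn_eq norm_sgn)
qed

lemma orth_proj_decomp:
  assumes "orth_proj P" "trace P = of_nat m"
  shows "\<exists>u. orthonormal_on {..<m} u \<and> P = (\<Sum>i<m. outer (u i) (u i))"
  using assms
proof (induction m arbitrary: P)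
  case 0
  then show ?case using orth_proj_trace_eq_0 by (auto simp: orthonormal_on_def)
next
  case (Suc m)
  moreover have "(of_nat (Suc m) :: complex) \<noteq> 0"
    by (rule of_nat_neq_0)
  ultimately have "P \<noteq> 0" by (auto simp: trace_def)
  then obtain y where y: "P *v y = y" "norm y = 1"
    using orth_proj_unit_vector[OF Suc.prems(1)] by blast
  define P' where "P' = P - outer y y"
  have P': "orth_proj P'"
    unfolding P'_def by (rule orth_proj_diff_outer[OF Suc.prems(1) y])
  have "trace P' = of_nat m"
    using Suc.prems(2) y(2) by (simp add: P'_def trace_sub trace_outer cinner_self)
  with Suc.IH[OF P'] obtain u where u: "orthonormal_on {..<m} u"
    and P'_eq: "P' = (\<Sum>i<m. outer (u i) (u i))" by blast
  have "P' *v y = 0"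
    using y by (simp add: P'_def matrix_vector_mult_diff_rdistrib outer_apply cinner_self)
  then have uy: "cinner (u i) y = 0" if "i < m" for i
    using sum_outer_apply_orthonormal[OF u _ , of i] that
    by (metis P'_eq cinner_hermitian orth_proj_hermitian[OF P'] cinner_zero_right finite_lessThan
        lessThan_iff)
  have yu: "cinner y (u i) = 0" if "i < m" for i
    using uy[OF that] by (simp add: cinner_commute[of y])
  have "cinner y y = 1"
    using y(2) by (simp add: cinner_self)
  then have "orthonormal_on {..<Suc m} (u(m := y))"
    using u uy yu unfolding orthonormal_on_def by (auto simp: less_Suc_eq)
  moreover have "P = (\<Sum>i<Suc m. outer ((u(m := y)) i) ((u(m := y)) i))"
  proof -
    have "(\<Sum>i<m. outer ((u(m := y)) i) ((u(m := y)) i)) = P'"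
      unfolding P'_eq by (rule sum.cong) auto
    then show ?thesis by (simp add: P'_def)
  qed
  ultimately show ?case by blast
qed

lemma sum_lessThan_add: "(\<Sum>a<k + m. f a) = (\<Sum>a<k. f a) + (\<Sum>b<m. f (k + b))"
  for k m :: nat
  by (induction m) (simp_all add: add.assoc)

lemma orthonormal_on_concat:
  assumes u: "orthonormal_on {..<k} u" and v: "orthonormal_on {..<m} v"
    and uv: "\<And>i j. i < k \<Longrightarrow> j < m \<Longrightarrow> cinner (u i) (v j) = 0"
  shows "orthonormal_on {..<k + m} (\<lambda>i. if i < k then u i else v (i - k))"
  unfolding orthonormal_on_def
proof (intro ballI)
  fix a b assume "a \<in> {..<k + m}" "b \<in> {..<k + m}"
  then have "a - k < m \<or> a < k" "b - k < m \<or> b < k" by auto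
  then show "cinner (if a < k then u a else v (a - k)) (if b < k then u b else v (b - k))
      = (if a = b then 1 else 0)"
    using u v uv[of a "b - k"] uv[of b "a - k"] cinner_commute[of "v (a - k)" "u b"]
    by (auto simp: orthonormal_on_def)
qed

definition adapted_basis :: "complex^'n^'n \<Rightarrow> nat \<Rightarrow> (nat \<Rightarrow> complex^'n) \<Rightarrow> bool" where
  "adapted_basis P k U \<longleftrightarrow> orthonormal_on {..<CARD('n)} U
    \<and> (\<Sum>a<CARD('n). outer (U a) (U a)) = mat 1
    \<and> (\<forall>a<k. P *v U a = U a) \<and> (\<forall>a. k \<le> a \<and> a < CARD('n) \<longrightarrow> P *v U a = 0)"

lemma orth_proj_adapted_basis:
  fixes P :: "complex^'n^'n"
  assumes P: "orth_proj P" and trP: "trace P = of_nat k" and kn: "k \<le> CARD('n)"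
  obtains U where "adapted_basis P k U"
proof -
  let ?m = "CARD('n) - k"
  obtain u where u: "orthonormal_on {..<k} u" and Pu: "P = (\<Sum>i<k. outer (u i) (u i))"
    using orth_proj_decomp[OF P trP] by blast
  have "trace (mat 1 - P) = of_nat ?m"
    using kn by (simp add: trace_sub trace_I trP of_nat_diff)
  then obtain v where v: "orthonormal_on {..<?m} v"
    and Qv: "mat 1 - P = (\<Sum>i<?m. outer (v i) (v i))"
    using orth_proj_decomp[OF orth_proj_compl[OF P]] by blast
  have Pu_eq: "P *v u i = u i" if "i < k" for i
    using sum_outer_apply_orthonormal[OF u] that by (simp add: Pu)
  have Pv_eq: "P *v v j = 0" if "j < ?m" for j
    using sum_outer_apply_orthonormal[OF v, of j] that
    by (simp add: Qv[symmetric] matrix_vector_mult_diff_rdistrib)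
  have uv: "cinner (u i) (v j) = 0" if "i < k" "j < ?m" for i j
    by (metis Pu_eq Pv_eq that cinner_hermitian orth_proj_hermitian[OF P] cinner_zero_right)
  define U where "U i = (if i < k then u i else v (i - k))" for i
  have "adapted_basis P k U"
    unfolding adapted_basis_def
  proof (intro conjI allI impI)
    show "orthonormal_on {..<CARD('n)} U"
      using orthonormal_on_concat[OF u v uv] kn by (simp add: U_def[abs_def])
    have "(\<Sum>a<CARD('n). outer (U a) (U a)) = (\<Sum>a<k + ?m. outer (U a) (U a))"
      using kn by simp
    also have "\<dots> = (\<Sum>a<k. outer (u a) (u a)) + (\<Sum>b<?m. outer (v b) (v b))"
      by (simp add: sum_lessThan_add U_def)
    also have "\<dots> = mat 1"
      by (simp add: Pu[symmetric] Qv[symmetric])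
    finally show "(\<Sum>a<CARD('n). outer (U a) (U a)) = mat 1" .
    show "P *v U a = U a" if "a < k" for a
      using that Pu_eq by (simp add: U_def)
    show "P *v U a = 0" if "k \<le> a \<and> a < CARD('n)" for a
      using that by (auto simp: U_def intro!: Pv_eq)
  qed
  then show thesis
    by (rule that)
qed

lemma trace_orth_proj_mult:
  assumes P: "orth_proj P" "trace P = of_nat k" and Q: "orth_proj Q"
  obtains r where "trace (P ** Q) = complex_of_real r" "0 \<le> r" "r \<le> real k"
proof -
  obtain u where u: "orthonormal_on {..<k} u" and P_eq: "P = (\<Sum>a<k. outer (u a) (u a))"
    using orth_proj_decomp[OF P] by blast
  have norm_u: "norm (u a) = 1" if "a < k" for a
    using orthonormal_on_norm[OF u] that by simp
  have "trace (P ** Q) = trace (Q ** P)"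
    by (rule trace_mul_sym)
  also have "\<dots> = complex_of_real (\<Sum>a<k. (norm (Q *v u a))\<^sup>2)"
    by (simp add: P_eq matrix_sum_ldistrib trace_sum trace_mult_outer cinner_orth_proj_self[OF Q])
  finally have "trace (P ** Q) = complex_of_real (\<Sum>a<k. (norm (Q *v u a))\<^sup>2)" .
  moreover have "(norm (Q *v u a))\<^sup>2 \<le> 1" if "a < k" for a
    using norm_orth_proj_le[OF Q, of "u a"] norm_u[OF that] by (simp add: power_le_one)
  then have "(\<Sum>a<k. (norm (Q *v u a))\<^sup>2) \<le> (\<Sum>a<k. 1)"
    by (intro sum_mono) simp
  ultimately show thesis
    by (intro that[of "\<Sum>a<k. (norm (Q *v u a))\<^sup>2"]) (auto intro: sum_nonneg)
qed

subsection \<open>The set S(P)\<close>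

lemma cmod_trace_mult_orth_proj_le:
  assumes "orth_proj Q"
  shows "cmod (trace (B ** Q)) \<le> (\<Sum>i\<in>UNIV. \<Sum>j\<in>UNIV. cmod (B$i$j))"
proof -
  have "cmod (trace (B ** Q)) = cmod (\<Sum>i\<in>UNIV. \<Sum>j\<in>UNIV. B$i$j * Q$j$i)"
    by (simp add: trace_def matrix_matrix_mult_def)
  also have "\<dots> \<le> (\<Sum>i\<in>UNIV. \<Sum>j\<in>UNIV. cmod (B$i$j * Q$j$i))"
    by (intro order.trans[OF norm_sum] sum_mono norm_sum)
  also have "\<dots> \<le> (\<Sum>i\<in>UNIV. \<Sum>j\<in>UNIV. cmod (B$i$j))"
    by (intro sum_mono) (auto simp: norm_mult intro: mult_left_le orth_proj_entry_le[OF assms])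
  finally show ?thesis .
qed

lemma cmod_trace_le_wk:
  assumes "orth_proj Q" "trace Q = of_nat k"
  shows "cmod (trace (B ** Q)) \<le> wk k B"
  unfolding wk_def
proof (rule cSup_upper)
  show "bdd_above {cmod (trace (B ** Q)) |Q. orth_proj Q \<and> trace Q = of_nat k}"
    by (rule bdd_aboveI[where M = "\<Sum>i\<in>UNIV. \<Sum>j\<in>UNIV. cmod (B$i$j)"])
      (auto intro: cmod_trace_mult_orth_proj_le)
qed (use assms in blast)

lemma mem_SH_iff:
  assumes P: "orth_proj P" "trace P = of_nat k"
  shows "B \<in> SH k P \<longleftrightarrow> cadj B = B \<and> Im (trace (B ** P)) = 0 \<and>
    (\<forall>Q. orth_proj Q \<and> trace Q = of_nat k \<longrightarrow> cmod (trace (B ** Q)) \<le> Re (trace (B ** P)))"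
proof
  assume "B \<in> SH k P"
  then show "cadj B = B \<and> Im (trace (B ** P)) = 0 \<and>
    (\<forall>Q. orth_proj Q \<and> trace Q = of_nat k \<longrightarrow> cmod (trace (B ** Q)) \<le> Re (trace (B ** P)))"
    by (auto simp: SH_def mem_Herm_iff cmod_trace_le_wk)
next
  assume B: "cadj B = B \<and> Im (trace (B ** P)) = 0 \<and>
    (\<forall>Q. orth_proj Q \<and> trace Q = of_nat k \<longrightarrow> cmod (trace (B ** Q)) \<le> Re (trace (B ** P)))"
  have "wk k B \<le> Re (trace (B ** P))"
    unfolding wk_def by (rule cSup_least) (use B P in auto)
  moreover have "Re (trace (B ** P)) \<le> wk k B"
    using complex_Re_le_cmod cmod_trace_le_wk[OF P] by (rule order.trans)
  ultimately show "B \<in> SH k P"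
    using B by (simp add: SH_def mem_Herm_iff complex_eq_iff)
qed

lemma convex_cone_SH:
  assumes P: "orth_proj P" "trace P = of_nat k"
  shows "convex_cone (SH k P)"
  unfolding convex_cone_iff
proof (intro conjI ballI allI impI)
  show "0 \<in> SH k P"
    by (simp add: mem_SH_iff[OF P] trace_def)
next
  fix A B assume "A \<in> SH k P" "B \<in> SH k P"
  then show "A + B \<in> SH k P"
    unfolding mem_SH_iff[OF P]
    by (auto simp: cadj_add matrix_add_rdistrib trace_add
        intro!: order.trans[OF norm_triangle_ineq] add_mono)
next
  fix B and c :: real assume "B \<in> SH k P" "0 \<le> c"
  then show "c *\<^sub>R B \<in> SH k P"
    unfolding mem_SH_iff[OF P]
    by (auto simp: cadj_scaleR scalar_matrix_assoc[symmetric] trace_scaleR norm_mult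
        intro: mult_left_mono)
qed

lemma orth_proj_add_outer_mem_SH:
  fixes P :: "complex^'n^'n"
  assumes P: "orth_proj P" "trace P = of_nat k" and x: "P *v x = x"
  shows "P + outer x x \<in> SH k P"
  unfolding mem_SH_iff[OF P]
proof (intro conjI allI impI)
  show "cadj (P + outer x x) = P + outer x x"
    by (simp add: cadj_add cadj_outer orth_proj_hermitian[OF P(1)])
  have trP: "trace ((P + outer x x) ** P) = complex_of_real (real k + (norm x)\<^sup>2)"
    by (simp add: matrix_add_rdistrib trace_add orth_proj_idem[OF P(1)] P(2)
        trace_mul_sym[of "outer x x"] trace_mult_outer x cinner_self)
  then show "Im (trace ((P + outer x x) ** P)) = 0" by simp
  fix Q :: "complex^'n^'n" assume Q: "orth_proj Q \<and> trace Q = of_nat k"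
  obtain r where r: "trace (P ** Q) = complex_of_real r" "0 \<le> r" "r \<le> real k"
    using trace_orth_proj_mult[OF P] Q by blast
  have trQ: "trace ((P + outer x x) ** Q) = complex_of_real (r + (norm (Q *v x))\<^sup>2)"
    using Q by (simp add: matrix_add_rdistrib trace_add r trace_mul_sym[of "outer x x"]
        trace_mult_outer cinner_orth_proj_self)
  have "(norm (Q *v x))\<^sup>2 \<le> (norm x)\<^sup>2"
    using Q norm_orth_proj_le[of Q x] by (simp add: power_mono)
  then show "cmod (trace ((P + outer x x) ** Q)) \<le> Re (trace ((P + outer x x) ** P))"
    unfolding trQ trP norm_of_real Re_complex_of_real
    using r zero_le_power2[of "norm (Q *v x)"] by arith
qed

lemma scaled_orth_proj_diff_outer_mem_SH:
  fixes P :: "complex^'n^'n"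
  assumes P: "orth_proj P" "trace P = of_nat k" and k: "1 \<le> k" and x: "P *v x = 0"
  shows "(norm x)\<^sup>2 *\<^sub>R P - outer x x \<in> SH k P"
  unfolding mem_SH_iff[OF P]
proof (intro conjI allI impI)
  show "cadj ((norm x)\<^sup>2 *\<^sub>R P - outer x x) = (norm x)\<^sup>2 *\<^sub>R P - outer x x"
    by (simp add: cadj_diff cadj_scaleR cadj_outer orth_proj_hermitian[OF P(1)])
  have trP: "trace (((norm x)\<^sup>2 *\<^sub>R P - outer x x) ** P) = complex_of_real ((norm x)\<^sup>2 * real k)"
    by (simp add: matrix_diff_rdistrib trace_sub scalar_matrix_assoc[symmetric] trace_scaleR
        orth_proj_idem[OF P(1)] P(2) trace_mul_sym[of "outer x x"] trace_mult_outer x)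
  then show "Im (trace (((norm x)\<^sup>2 *\<^sub>R P - outer x x) ** P)) = 0" by simp
  fix Q :: "complex^'n^'n" assume Q: "orth_proj Q \<and> trace Q = of_nat k"
  obtain r where r: "trace (P ** Q) = complex_of_real r" "0 \<le> r" "r \<le> real k"
    using trace_orth_proj_mult[OF P] Q by blast
  have trQ: "trace (((norm x)\<^sup>2 *\<^sub>R P - outer x x) ** Q)
      = complex_of_real ((norm x)\<^sup>2 * r - (norm (Q *v x))\<^sup>2)"
    using Q by (simp add: matrix_diff_rdistrib trace_sub scalar_matrix_assoc[symmetric] trace_scaleR
        r trace_mul_sym[of "outer x x"] trace_mult_outer cinner_orth_proj_self)
  have "(norm (Q *v x))\<^sup>2 \<le> (norm x)\<^sup>2"
    using Q norm_orth_proj_le[of Q x] by (simp add: power_mono)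
  moreover have "0 \<le> (norm x)\<^sup>2 * r" "(norm x)\<^sup>2 * r \<le> (norm x)\<^sup>2 * real k"
    "(norm x)\<^sup>2 \<le> (norm x)\<^sup>2 * real k"
    using r k by (simp_all add: mult_left_mono mult_le_cancel_left1)
  ultimately show "cmod (trace (((norm x)\<^sup>2 *\<^sub>R P - outer x x) ** Q))
      \<le> Re (trace (((norm x)\<^sup>2 *\<^sub>R P - outer x x) ** P))"
    unfolding trQ trP norm_of_real Re_complex_of_real
    using zero_le_power2[of "norm (Q *v x)"] by arith
qed

lemma outer_mem_span_SH:
  assumes P: "orth_proj P" "trace P = of_nat k" and k: "1 \<le> k"
    and x: "P *v x = x \<or> P *v x = 0"
  shows "outer x x \<in> span (SH k P)"
proof -
  have P_mem: "P \<in> span (SH k P)"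
    using orth_proj_add_outer_mem_SH[OF P, of 0] by (simp add: span_base)
  from x show ?thesis
  proof
    assume "P *v x = x"
    then have "(P + outer x x) - P \<in> span (SH k P)"
      by (intro span_diff span_base orth_proj_add_outer_mem_SH[OF P] P_mem)
    then show ?thesis by simp
  next
    assume "P *v x = 0"
    then have "(norm x)\<^sup>2 *\<^sub>R P - ((norm x)\<^sup>2 *\<^sub>R P - outer x x) \<in> span (SH k P)"
      by (intro span_diff span_scale span_base scaled_orth_proj_diff_outer_mem_SH[OF P k] P_mem)
    then show ?thesis by simp
  qed
qed

subsection \<open>Elements of S(P) commute with P\<close>

lemma Re_cinner_hermitian_add_smult:
  assumes "cadj B = B"
  shows "Re (cinner (u + s *s v) (B *v (u + s *s v)))
    = Re (cinner u (B *v u)) + 2 * Re (s * cinner u (B *v v)) + (cmod s)\<^sup>2 * Re (cinner v (B *v v))"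
proof -
  have "cinner v (B *v u) = cnj (cinner u (B *v v))"
    using assms by (metis cinner_commute cinner_hermitian)
  moreover have "cnj s * s = complex_of_real ((cmod s)\<^sup>2)"
    by (metis complex_norm_square mult.commute)
  moreover have "cinner (u + s *s v) (B *v (u + s *s v)) = cinner u (B *v u)
      + s * cinner u (B *v v) + cnj s * cinner v (B *v u) + cnj s * s * cinner v (B *v v)"
    by (simp only: matrix_vector_right_distrib vector_scalar_commute cinner_add_left
        cinner_add_right cinner_smult_left cinner_smult_right) (simp add: algebra_simps)
  ultimately show ?thesis
    by simp
qed

lemma norm_add_smult_orthogonal:
  assumes "cinner u v = 0"
  shows "(norm (u + s *s v))\<^sup>2 = (norm u)\<^sup>2 + (cmod s)\<^sup>2 * (norm v)\<^sup>2"
proof -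
  have "cinner v u = 0"
    using assms by (simp add: cinner_commute[of v])
  then have "cinner (u + s *s v) (u + s *s v) = cinner u u + (cnj s * s) * cinner v v"
    using assms by (simp add: cinner_add_left cinner_add_right cinner_smult_left cinner_smult_right)
  then have "complex_of_real ((norm (u + s *s v))\<^sup>2)
      = complex_of_real ((norm u)\<^sup>2 + (cmod s)\<^sup>2 * (norm v)\<^sup>2)"
    by (simp add: cinner_self complex_norm_square[symmetric] mult.commute)
  then show ?thesis
    by (simp only: of_real_eq_iff)
qed

lemma cinner_sgn_eq_0_iff: "cinner (sgn x) (B *v sgn y) = 0 \<longleftrightarrow> cinner x (B *v y) = 0"
  by (auto simp: sgn_div_norm matrix_vector_mult_scaleR_complex cinner_scaleR_left cinner_scaleR_right)

lemma cinner_sgn_self: "cinner (sgn w) (B *v sgn w) = cinner w (B *v w) / complex_of_real ((norm w)\<^sup>2)"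
  by (simp add: sgn_div_norm matrix_vector_mult_scaleR_complex cinner_scaleR_left
      cinner_scaleR_right power2_eq_square divide_inverse mult_ac)

lemma orth_proj_exchange:
  assumes P: "orth_proj P" and u: "P *v u = u" "norm u = 1"
    and w: "(P - outer u u) *v w = 0" "norm w = 1"
  shows "orth_proj (P - outer u u + outer w w)"
    and "trace (P - outer u u + outer w w) = trace P"
    and "trace (B ** (P - outer u u + outer w w))
      = trace (B ** P) - cinner u (B *v u) + cinner w (B *v w)"
  using orth_proj_add_outer[OF orth_proj_diff_outer[OF P u] w] u(2) w(2)
  by (simp_all add: trace_add trace_sub trace_outer cinner_self matrix_add_ldistrib
      matrix_diff_ldistrib trace_mult_outer)

lemma perturbation_gain:
  fixes A D m :: real
  assumes "m > 0" and t: "t = 1 / (\<bar>D - A\<bar> + 1)"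
  shows "A < (A + 2 * t * m + t\<^sup>2 * m * D) / (1 + t\<^sup>2 * m)"
proof -
  have "t > 0"
    using t by (simp add: add_pos_nonneg)
  moreover have "t * (\<bar>D - A\<bar> + 1) = 1"
    using t by simp
  ultimately have "t * \<bar>D - A\<bar> < 1"
    by (simp add: distrib_left)
  moreover have "t * (- \<bar>D - A\<bar>) \<le> t * (D - A)"
    using \<open>t > 0\<close> by (intro mult_left_mono) auto
  ultimately have "0 < 2 + t * (D - A)"
    by simp
  then have "0 < t * m * (2 + t * (D - A))"
    using \<open>t > 0\<close> assms(1) by simp
  moreover have "t * m * (2 + t * (D - A)) = (A + 2 * t * m + t\<^sup>2 * m * D) - A * (1 + t\<^sup>2 * m)"
    by (simp add: algebra_simps power2_eq_square)
  moreover have "1 + t\<^sup>2 * m > 0"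
    using assms(1) by (simp add: add_pos_nonneg)
  ultimately show ?thesis
    by (simp add: less_divide_eq)
qed

lemma orth_proj_tilt:
  fixes P :: "complex^'n^'n" and s :: complex
  assumes P: "orth_proj P" and u: "P *v u = u" "norm u = 1" and v: "P *v v = 0" "norm v = 1"
  defines "w \<equiv> u + s *s v"
  defines "Q \<equiv> P - outer u u + outer (sgn w) (sgn w)"
  shows "orth_proj Q" and "trace Q = trace P"
    and "Re (trace (B ** Q)) = Re (trace (B ** P)) - Re (cinner u (B *v u))
      + Re (cinner w (B *v w)) / (1 + (cmod s)\<^sup>2)"
proof -
  have uv: "cinner u v = 0"
    by (metis u(1) v(1) cinner_hermitian orth_proj_hermitian[OF P] cinner_zero_right)
  have nw: "(norm w)\<^sup>2 = 1 + (cmod s)\<^sup>2"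
    using norm_add_smult_orthogonal[OF uv] u(2) v(2) by (simp add: w_def)
  have "(P - outer u u) *v w = 0"
    using u v uv
    by (simp add: w_def matrix_vector_mult_diff_rdistrib matrix_vector_right_distrib
        vector_scalar_commute outer_apply cinner_add_right cinner_smult_right cinner_self)
  then have Rw: "(P - outer u u) *v sgn w = 0"
    by (simp add: sgn_div_norm matrix_vector_mult_scaleR_complex)
  have "(norm w)\<^sup>2 > 0"
    unfolding nw by (simp add: add_pos_nonneg)
  then have sgn_w: "norm (sgn w) = 1"
    by (simp add: norm_sgn)
  show "orth_proj Q" "trace Q = trace P"
    using orth_proj_exchange[OF P u Rw sgn_w] by (simp_all add: Q_def)
  show "Re (trace (B ** Q)) = Re (trace (B ** P)) - Re (cinner u (B *v u))
      + Re (cinner w (B *v w)) / (1 + (cmod s)\<^sup>2)"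
    using orth_proj_exchange(3)[OF P u Rw sgn_w, of B]
    by (simp add: Q_def cinner_sgn_self nw Re_divide_of_real)
qed

text \<open>If c = <u, B v> were nonzero, tilting u towards v, i.e. replacing u by the unit vector along
  u + t c^* v with t > 0 small, would give a rank-k projection Q with Re tr(BQ) > tr(BP).\<close>
lemma SH_cross_term_eq_0_unit:
  fixes P B :: "complex^'n^'n"
  assumes P: "orth_proj P" "trace P = of_nat k" and B: "B \<in> SH k P"
    and u: "P *v u = u" "norm u = 1" and v: "P *v v = 0" "norm v = 1"
  shows "cinner u (B *v v) = 0"
proof (rule ccontr)
  define c where "c = cinner u (B *v v)"
  assume "cinner u (B *v v) \<noteq> 0"
  then have m: "(cmod c)\<^sup>2 > 0"
    by (simp add: c_def)
  have hB: "cadj B = B"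
    and dom: "\<And>Q. orth_proj Q \<Longrightarrow> trace Q = of_nat k \<Longrightarrow> cmod (trace (B ** Q)) \<le> Re (trace (B ** P))"
    using B by (auto simp: mem_SH_iff[OF P])
  define A where "A = Re (cinner u (B *v u))"
  define D where "D = Re (cinner v (B *v v))"
  define t where "t = 1 / (\<bar>D - A\<bar> + 1)"
  define s where "s = complex_of_real t * cnj c"
  define Q where "Q = P - outer u u + outer (sgn (u + s *s v)) (sgn (u + s *s v))"
  have Q: "orth_proj Q" "trace Q = of_nat k"
    using orth_proj_tilt(1,2)[OF P(1) u v] P(2) by (simp_all add: Q_def)
  have "Re (cinner (u + s *s v) (B *v (u + s *s v))) = A + 2 * t * (cmod c)\<^sup>2 + t\<^sup>2 * (cmod c)\<^sup>2 * D"
    unfolding Re_cinner_hermitian_add_smult[OF hB]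
    by (simp add: s_def A_def D_def c_def[symmetric] norm_mult power_mult_distrib mult_ac)
      (simp add: cmod_power2 power2_eq_square[of "Re c"] power2_eq_square[of "Im c"] algebra_simps)
  then have "Re (trace (B ** Q))
      = Re (trace (B ** P)) - A + (A + 2 * t * (cmod c)\<^sup>2 + t\<^sup>2 * (cmod c)\<^sup>2 * D) / (1 + t\<^sup>2 * (cmod c)\<^sup>2)"
    using orth_proj_tilt(3)[OF P(1) u v, where s = s and B = B]
    by (simp add: Q_def A_def s_def norm_mult power_mult_distrib)
  also have "\<dots> > Re (trace (B ** P))"
    using perturbation_gain[OF m t_def] by simp
  finally show False
    using dom[OF Q] complex_Re_le_cmod[of "trace (B ** Q)"] by linarith
qed

lemma SH_cross_term_eq_0:
  fixes P B :: "complex^'n^'n"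
  assumes P: "orth_proj P" "trace P = of_nat k" and B: "B \<in> SH k P"
    and u: "P *v u = u" and v: "P *v v = 0"
  shows "cinner u (B *v v) = 0"
proof (cases "u = 0 \<or> v = 0")
  case False
  have "P *v sgn v = 0"
    using v by (simp add: sgn_div_norm matrix_vector_mult_scaleR_complex)
  then have "cinner (sgn u) (B *v sgn v) = 0"
    using False u by (intro SH_cross_term_eq_0_unit[OF P B]) (simp_all add: matrix_vector_mult_sgn_eq norm_sgn)
  then show ?thesis
    by (simp add: cinner_sgn_eq_0_iff)
qed auto

lemma SH_commute:
  fixes P B :: "complex^'n^'n"
  assumes P: "orth_proj P" "trace P = of_nat k" and B: "B \<in> SH k P"
  shows "B ** P = P ** B"
proof -
  have hP: "cadj P = P" "P ** P = P"
    using P(1) by (simp_all add: orth_proj_hermitian orth_proj_idem)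
  have hB: "cadj B = B"
    using B by (simp add: SH_def mem_Herm_iff)
  have "P ** B ** (mat 1 - P) = 0"
  proof (rule matrix_eq_0_if_cinner)
    fix x y
    have "cinner x ((P ** B ** (mat 1 - P)) *v y) = cinner (P *v x) (B *v ((mat 1 - P) *v y))"
      by (simp add: matrix_vector_mul_assoc[symmetric] cinner_hermitian hP)
    also have "\<dots> = 0"
      using P(1) by (intro SH_cross_term_eq_0[OF P B])
        (simp_all add: orth_proj_apply_idem matrix_vector_mult_diff_rdistrib matrix_vector_mult_diff_distrib)
    finally show "cinner x ((P ** B ** (mat 1 - P)) *v y) = 0" .
  qed
  then have PB: "P ** B = P ** B ** P"
    by (simp add: matrix_diff_ldistrib)
  then have "cadj (P ** B) = cadj (P ** B ** P)"
    by simp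
  then have "B ** P = P ** B ** P"
    by (simp add: cadj_mult hP hB matrix_mul_assoc)
  with PB show ?thesis
    by simp
qed

subsection \<open>A real basis of the block-diagonal Hermitian matrices\<close>

definition sym_outer :: "complex^'n \<Rightarrow> complex^'n \<Rightarrow> complex^'n^'n" where
  "sym_outer x y = outer x y + outer y x"

lemma sym_outer_commute: "sym_outer x y = sym_outer y x"
  by (simp add: sym_outer_def add.commute)

lemma cadj_sym_outer: "cadj (sym_outer x y) = sym_outer x y"
  by (simp add: sym_outer_def cadj_add cadj_outer add.commute)

lemma sym_outer_polarization: "sym_outer x y = outer (x + y) (x + y) - outer x x - outer y y"
  by (simp add: sym_outer_def outer_def vec_eq_iff algebra_simps)

lemma sym_outer_zero_left [simp]: "sym_outer 0 y = 0"
  by (simp add: sym_outer_def)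

lemma sym_outer_smult_left:
  "sym_outer (c *s x) y = Re c *\<^sub>R sym_outer x y + Im c *\<^sub>R sym_outer (\<i> *s x) y"
  by (simp add: sym_outer_def outer_def vec_eq_iff complex_eq_iff algebra_simps)

lemma sym_outer_i_right: "sym_outer x (\<i> *s y) = - sym_outer (\<i> *s x) y"
  by (simp add: sym_outer_def outer_def vec_eq_iff algebra_simps)

lemma sym_outer_i_self: "sym_outer (\<i> *s x) x = 0"
  by (simp add: sym_outer_def outer_def vec_eq_iff algebra_simps)

text \<open>herm_basis U (i, j) is U_i U_j^* + U_j U_i^* for i \<le> j and i (U_j U_i^* - U_i U_j^*)
  for i > j; on the blocks of an adapted basis these form the standard real basis of H_k + H_(n-k).\<close>
definition herm_basis :: "(nat \<Rightarrow> complex^'n) \<Rightarrow> nat \<times> nat \<Rightarrow> complex^'n^'n" where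
  "herm_basis U p = (case p of (i, j) \<Rightarrow>
     if i \<le> j then sym_outer (U i) (U j) else sym_outer (U i) (\<i> *s U j))"

definition block_pairs :: "nat \<Rightarrow> nat \<Rightarrow> (nat \<times> nat) set" where
  "block_pairs k n = {..<k} \<times> {..<k} \<union> {k..<n} \<times> {k..<n}"

lemma card_block_pairs: "k \<le> n \<Longrightarrow> card (block_pairs k n) = k\<^sup>2 + (n - k)\<^sup>2"
  unfolding block_pairs_def
  by (subst card_Un_disjoint) (auto simp: card_cartesian_product power2_eq_square)

lemma inner_complex_eq: "inner a b = Re (cnj a * b)"
  by (simp add: inner_complex_def)

text \<open>The inner product that complex^'n^'n carries as a Euclidean space is the real Frobenius
  product Re tr(X^* Y); the matrices herm_basis U p are pairwise orthogonal for it.\<close>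
lemma inner_outer_outer: "inner (outer x y) (outer z w) = Re (cinner x z * cinner w y)"
proof -
  have "inner (outer x y) (outer z w)
      = Re (\<Sum>i\<in>UNIV. \<Sum>j\<in>UNIV. (cnj (x$i) * z$i) * (cnj (w$j) * y$j))"
    by (simp add: inner_vec_def outer_def inner_complex_eq Re_sum mult_ac)
  then show ?thesis
    by (simp add: cinner_def sum_product)
qed

lemma inner_sym_outer: "inner (sym_outer x y) (sym_outer z w)
    = Re (cinner x z * cinner w y + cinner x w * cinner z y + cinner y z * cinner w x
      + cinner y w * cinner z x)"
  by (simp add: sym_outer_def inner_add_left inner_add_right inner_outer_outer)

lemma inner_herm_basis:
  assumes U: "orthonormal_on {..<n} U" and p: "p \<in> {..<n} \<times> {..<n}" and q: "q \<in> {..<n} \<times> {..<n}"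
  shows "inner (herm_basis U p) (herm_basis U q) = (if p = q then if fst p = snd p then 4 else 2 else 0)"
proof -
  obtain i j a b where "p = (i, j)" "q = (a, b)" "i < n" "j < n" "a < n" "b < n"
    using p q by auto
  with U show ?thesis
    by (auto simp: herm_basis_def inner_sym_outer cinner_smult_left cinner_smult_right
        orthonormal_on_def)
qed

lemma herm_basis_independent:
  assumes U: "orthonormal_on {..<n} U" and S: "S \<subseteq> {..<n} \<times> {..<n}"
  shows "inj_on (herm_basis U) S" and "independent (herm_basis U ` S)"
proof -
  have ip: "inner (herm_basis U p) (herm_basis U q) = (if p = q then if fst p = snd p then 4 else 2 else 0)"
    if "p \<in> S" "q \<in> S" for p q
    using inner_herm_basis[OF U] S that by blast
  show "inj_on (herm_basis U) S"
    by (rule inj_onI) (metis ip zero_neq_numeral)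
  show "independent (herm_basis U ` S)"
  proof (rule pairwise_orthogonal_independent)
    show "pairwise orthogonal (herm_basis U ` S)"
      by (auto simp: pairwise_def orthogonal_def ip)
    show "0 \<notin> herm_basis U ` S"
    proof
      assume "0 \<in> herm_basis U ` S"
      then obtain p where "p \<in> S" "herm_basis U p = 0" by auto
      then show False
        using ip[of p p] by (simp split: if_splits)
    qed
  qed
qed

definition same_block :: "complex^'n^'n \<Rightarrow> complex^'n \<Rightarrow> complex^'n \<Rightarrow> bool" where
  "same_block P x y \<longleftrightarrow> (P *v x = x \<and> P *v y = y) \<or> (P *v x = 0 \<and> P *v y = 0)"

lemma same_block_smult_right: "same_block P x y \<Longrightarrow> same_block P x (c *s y)"
  by (auto simp: same_block_def vector_scalar_commute)

lemma sym_outer_mem_span_SH: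
  assumes P: "orth_proj P" "trace P = of_nat k" and k: "1 \<le> k" and xy: "same_block P x y"
  shows "sym_outer x y \<in> span (SH k P)"
proof -
  have "P *v z = z \<or> P *v z = 0" if "z \<in> {x + y, x, y}" for z
    using xy that by (auto simp: same_block_def matrix_vector_right_distrib)
  then have "outer z z \<in> span (SH k P)" if "z \<in> {x + y, x, y}" for z
    using that by (blast intro: outer_mem_span_SH[OF P k])
  then show ?thesis
    unfolding sym_outer_polarization by (intro span_diff) auto
qed

lemma orth_proj_commute_sym_outer:
  assumes P: "orth_proj P" and xy: "same_block P x y"
  shows "P ** sym_outer x y = sym_outer x y ** P"
  using xy by (auto simp: same_block_def sym_outer_def matrix_add_ldistrib matrix_add_rdistrib
      mult_outer_left mult_outer_right orth_proj_hermitian[OF P])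

lemma outer_sum_left: "outer (sum f S) y = (\<Sum>i\<in>S. outer (f i) y)"
  by (induct S rule: infinite_finite_induct) (auto simp: outer_def vec_eq_iff distrib_right)

lemma hermitian_expansion:
  assumes U: "(\<Sum>a<n. outer (U a) (U a)) = mat 1" and B: "cadj B = B"
  shows "B = (\<Sum>a<n. \<Sum>b<n. (1/2) *\<^sub>R sym_outer (cinner (U a) (B *v U b) *s U a) (U b))"
proof -
  define c where "c a b = cinner (U a) (B *v U b)" for a b
  have col: "B *v U b = (\<Sum>a<n. c a b *s U a)" for b
  proof -
    have "B *v U b = mat 1 *v (B *v U b)"
      by simp
    also have "\<dots> = (\<Sum>a<n. c a b *s U a)"
      by (simp only: U[symmetric] sum_matrix_vector_mult outer_apply c_def)
    finally show ?thesis .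
  qed
  have "B = B ** (\<Sum>b<n. outer (U b) (U b))"
    by (simp add: U)
  also have "\<dots> = (\<Sum>a<n. \<Sum>b<n. outer (c a b *s U a) (U b))"
    by (subst sum.swap) (simp add: matrix_sum_ldistrib mult_outer_left col outer_sum_left)
  finally have eq: "B = (\<Sum>a<n. \<Sum>b<n. outer (c a b *s U a) (U b))" .
  then have "cadj B = (\<Sum>a<n. \<Sum>b<n. outer (U b) (c a b *s U a))"
    by (metis (no_types, lifting) cadj_sum cadj_outer sum.cong)
  with eq have "B + cadj B = (\<Sum>a<n. \<Sum>b<n. sym_outer (c a b *s U a) (U b))"
    by (simp add: sym_outer_def sum.distrib)
  moreover have "B = (1/2) *\<^sub>R (B + cadj B)"
    using B by (simp add: scaleR_2[symmetric])
  ultimately show ?thesis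
    by (simp add: scaleR_sum_right c_def)
qed

lemma adapted_basis_same_block:
  fixes P :: "complex^'n^'n"
  assumes "adapted_basis P k U" "(a, b) \<in> block_pairs k CARD('n)"
  shows "same_block P (U a) (U b)"
  using assms by (auto simp: adapted_basis_def block_pairs_def same_block_def)

lemma herm_basis_same_block:
  fixes P :: "complex^'n^'n"
  assumes "adapted_basis P k U" "p \<in> block_pairs k CARD('n)"
  obtains x y where "same_block P x y" "herm_basis U p = sym_outer x y"
proof (cases p)
  case (Pair i j)
  then have "same_block P (U i) (U j)"
    using adapted_basis_same_block[OF assms(1)] assms(2) by simp
  then show thesis
    using that[of "U i" "U j"] that[of "U i" "\<i> *s U j"] same_block_smult_right[of P "U i" "U j"]
    by (cases "i \<le> j") (simp_all add: herm_basis_def Pair)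
qed

lemma sym_outer_smult_mem_span_herm_basis:
  assumes ab: "(a, b) \<in> block_pairs k n"
  shows "sym_outer (c *s U a) (U b) \<in> span (herm_basis U ` block_pairs k n)"
proof -
  have ba: "(b, a) \<in> block_pairs k n"
    using ab by (auto simp: block_pairs_def)
  have hb: "herm_basis U (a, b) \<in> span (herm_basis U ` block_pairs k n)"
    "herm_basis U (b, a) \<in> span (herm_basis U ` block_pairs k n)"
    using ab ba by (auto intro: span_base)
  have "sym_outer (U a) (U b) \<in> span (herm_basis U ` block_pairs k n)"
    using hb by (cases "a \<le> b") (auto simp: herm_basis_def sym_outer_commute)
  moreover have "sym_outer (\<i> *s U a) (U b) \<in> span (herm_basis U ` block_pairs k n)"
  proof (cases a b rule: linorder_cases)
    case less
    then show ?thesis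
      using hb(2) by (simp add: herm_basis_def sym_outer_commute)
  next
    case equal
    then show ?thesis
      by (simp add: sym_outer_i_self span_zero)
  next
    case greater
    then have "sym_outer (\<i> *s U a) (U b) = - herm_basis U (a, b)"
      by (simp add: herm_basis_def sym_outer_i_right)
    then show ?thesis
      using hb(1) by (simp add: span_neg)
  qed
  ultimately show ?thesis
    by (subst sym_outer_smult_left) (intro span_add span_scale)
qed

lemma commuting_hermitian_mem_span_herm_basis:
  fixes P :: "complex^'n^'n"
  assumes P: "orth_proj P" and U: "adapted_basis P k U"
    and B: "cadj B = B" "B ** P = P ** B"
  shows "B \<in> span (herm_basis U ` block_pairs k CARD('n))"
proof -
  let ?n = "CARD('n)" and ?S = "span (herm_basis U ` block_pairs k CARD('n))"
  have cross: "cinner (U a) (B *v U b) = 0"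
    if "a < ?n" "b < ?n" "(a, b) \<notin> block_pairs k ?n" for a b
  proof -
    have "cinner (U a) (B *v (P *v U b)) = cinner (U a) (P *v (B *v U b))"
      by (simp add: matrix_vector_mul_assoc B(2))
    also have "\<dots> = cinner (P *v U a) (B *v U b)"
      by (simp add: cinner_hermitian orth_proj_hermitian[OF P])
    finally have "cinner (U a) (B *v (P *v U b)) = cinner (P *v U a) (B *v U b)" .
    then show ?thesis
      using U that by (auto simp: adapted_basis_def block_pairs_def not_less)
  qed
  have "(1/2) *\<^sub>R sym_outer (cinner (U a) (B *v U b) *s U a) (U b) \<in> ?S"
    if "a < ?n" "b < ?n" for a b
  proof (cases "(a, b) \<in> block_pairs k ?n")
    case True
    then show ?thesis
      by (intro span_scale sym_outer_smult_mem_span_herm_basis)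
  next
    case False
    then show ?thesis
      using cross[OF that] by (simp add: span_zero)
  qed
  then have "(\<Sum>a<?n. \<Sum>b<?n. (1/2) *\<^sub>R sym_outer (cinner (U a) (B *v U b) *s U a) (U b)) \<in> ?S"
    by (auto intro!: span_sum)
  moreover have "(\<Sum>a<?n. outer (U a) (U a)) = mat 1"
    using U by (simp add: adapted_basis_def)
  note expansion = hermitian_expansion[OF this B(1)]
  ultimately show ?thesis
    by (subst expansion)
qed

subsection \<open>Span and dimension of S(P)\<close>

lemma subspace_hermitian_commutant: "subspace {B \<in> Herm. B ** P = P ** B}"
  unfolding subspace_def
  by (auto simp: mem_Herm_iff cadj_add cadj_scaleR matrix_add_ldistrib matrix_add_rdistrib
      scalar_matrix_assoc[symmetric] matrix_scalar_ac)

lemma span_herm_basis_eq_commutant: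
  fixes P :: "complex^'n^'n"
  assumes P: "orth_proj P" and U: "adapted_basis P k U"
  shows "span (herm_basis U ` block_pairs k CARD('n)) = {B \<in> Herm. B ** P = P ** B}"
proof
  show "span (herm_basis U ` block_pairs k CARD('n)) \<subseteq> {B \<in> Herm. B ** P = P ** B}"
  proof (rule span_minimal[OF _ subspace_hermitian_commutant], safe)
    fix p assume "p \<in> block_pairs k CARD('n)"
    then obtain x y where "same_block P x y" "herm_basis U p = sym_outer x y"
      using herm_basis_same_block[OF U] by metis
    then show "herm_basis U p \<in> Herm" "herm_basis U p ** P = P ** herm_basis U p"
      by (simp_all add: mem_Herm_iff cadj_sym_outer orth_proj_commute_sym_outer[OF P])
  qed
  show "{B \<in> Herm. B ** P = P ** B} \<subseteq> span (herm_basis U ` block_pairs k CARD('n))"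
    using commuting_hermitian_mem_span_herm_basis[OF P U] by (auto simp: mem_Herm_iff)
qed

lemma span_SH_eq_commutant:
  fixes P :: "complex^'n^'n"
  assumes P: "orth_proj P" "trace P = of_nat k" and k: "1 \<le> k" and U: "adapted_basis P k U"
  shows "span (SH k P) = {B \<in> Herm. B ** P = P ** B}"
proof
  show "span (SH k P) \<subseteq> {B \<in> Herm. B ** P = P ** B}"
    by (rule span_minimal[OF _ subspace_hermitian_commutant])
      (auto simp: SH_def intro: SH_commute[OF P])
  have "herm_basis U p \<in> span (SH k P)" if "p \<in> block_pairs k CARD('n)" for p
    using herm_basis_same_block[OF U that] sym_outer_mem_span_SH[OF P k] by metis
  then have "span (herm_basis U ` block_pairs k CARD('n)) \<subseteq> span (SH k P)"
    by (intro span_minimal) auto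
  then show "{B \<in> Herm. B ** P = P ** B} \<subseteq> span (SH k P)"
    by (simp add: span_herm_basis_eq_commutant[OF P(1) U])
qed

lemma dim_hermitian_commutant:
  fixes P :: "complex^'n^'n"
  assumes P: "orth_proj P" and U: "adapted_basis P k U" and kn: "k \<le> CARD('n)"
  shows "dim {B \<in> Herm. B ** P = P ** B} = k\<^sup>2 + (CARD('n) - k)\<^sup>2"
proof -
  let ?S = "block_pairs k CARD('n)"
  have ON: "orthonormal_on {..<CARD('n)} U"
    using U by (simp add: adapted_basis_def)
  have sub: "?S \<subseteq> {..<CARD('n)} \<times> {..<CARD('n)}"
    using kn by (auto simp: block_pairs_def)
  have "dim {B \<in> Herm. B ** P = P ** B} = dim (span (herm_basis U ` ?S))"
    by (simp add: span_herm_basis_eq_commutant[OF P U])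
  also have "\<dots> = card (herm_basis U ` ?S)"
    by (rule dim_span_eq_card_independent[OF herm_basis_independent(2)[OF ON sub]])
  also have "\<dots> = card ?S"
    by (rule card_image[OF herm_basis_independent(1)[OF ON sub]])
  finally show ?thesis
    by (simp add: card_block_pairs kn)
qed

lemma SH_eq_commuting:
  fixes P :: "complex^'n^'n"
  assumes P: "orth_proj P" "trace P = of_nat k"
  shows "SH k P = {B \<in> Herm. B ** P = P ** B \<and> trace (P ** B ** P) = complex_of_real (wk k B)}"
proof -
  have "B \<in> SH k P \<longleftrightarrow> B \<in> Herm \<and> B ** P = P ** B \<and> trace (P ** B ** P) = complex_of_real (wk k B)"
    for B
  proof -
    have "trace (P ** B ** P) = trace (B ** P)" if "B ** P = P ** B"
      using that orth_proj_idem[OF P(1)] by (metis matrix_mul_assoc)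
    then show ?thesis
      using SH_commute[OF P, of B] unfolding SH_def by auto
  qed
  then show ?thesis
    by blast
qed

theorem mainTheorem9:
  fixes P :: "complex^'n^'n" and k :: nat
  assumes "1 \<le> k" and "k < CARD('n)"
    and "orth_proj P" and "trace P = of_nat k"
  shows "convex_cone (SH k P)
    \<and> dim (span (SH k P)) = k^2 + (CARD('n) - k)^2
    \<and> SH k P = {B \<in> Herm. B ** P = P ** B \<and> trace (P ** B ** P) = complex_of_real (wk k B)}
    \<and> span (SH k P) = {B \<in> Herm. B ** P = P ** B}"
proof -
  have P: "orth_proj P" "trace P = of_nat k" and kn: "k \<le> CARD('n)"
    using assms by simp_all
  obtain U where U: "adapted_basis P k U"
    using orth_proj_adapted_basis[OF P kn] .
  have span: "span (SH k P) = {B \<in> Herm. B ** P = P ** B}"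
    by (rule span_SH_eq_commutant[OF P assms(1) U])
  show ?thesis
    using convex_cone_SH[OF P] SH_eq_commuting[OF P] span dim_hermitian_commutant[OF P(1) U kn]
    by simp
qed

end
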